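(* There does not exist $A\in\mathbb{Z}^{24}$ such that, for every positive integer $m$, the orbit of $S=\mathrm{IAP}(\pi_m(A),\pi_m(A)X_{24})$ is $(24m,24m)$-periodic in $\mathbb{Z}/m\mathbb{Z}$ and the triangles $\nabla S[24\lambda m]$ are balanced in $\mathbb{Z}/m\mathbb{Z}$ for all non-negative integers $\lambda$.
   Context: $\pi_m$ is reduction mod $m$; tuples are row vectors; $X_{24}=(\delta_{r,s}+\delta_{r,25-s})_{1\le r,s\le24}$. For $24$-tuples $A=(a_0,\dots,a_{23})$, $D=(d_0,\dots,d_{23})$, $\mathrm{IAP}(A,D)=(u_j)_{j\in\mathbb{Z}}$ with $u_{24q+r}=a_r+qd_r$. $S[n]=(u_0,\dots,u_{n-1})$. The orbit of $(u_j)$ is $(a_{i,j})_{(i,j)\in\mathbb{N}\times\mathbb{Z}}$ with $a_{0,j}=u_j$, $a_{i,j}=-a_{i-1,j}-a_{i-1,j+1}$; it is $(p,q)$-periodic if $a_{i+q,j}=a_{i,j+p}=a_{i,j}$ for all $(i,j)$. For a finite sequence, $\nabla(u_0,\dots,u_{n-1})=(a_{i,j})_{i+j<n}$ defined by the same rule; it is balanced if every element of $\mathbb{Z}/m\mathbb{Z}$ occurs equally often among its entries. *)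

theory Defs
  imports Main
begin

text \<open>Elements of Z/mZ are represented by their canonical representatives in {0..<m}
  (as integers); reduction mod m is \<open>x mod int m\<close>. Tuples in Z^24 are integer lists of
  length 24, indexed 0..23.\<close>

definition X24 :: "nat \<Rightarrow> nat \<Rightarrow> int" where
  "X24 r s = (if r = s then 1 else 0) + (if r = 25 - s then 1 else 0)"

definition pi_m :: "nat \<Rightarrow> int list \<Rightarrow> int list" where
  "pi_m m A = map (\<lambda>x. x mod int m) A"

text \<open>row vector (24-tuple) times X24, computed in Z/mZ; entry s (0-indexed) corresponds to
  column s+1 of the 1-indexed matrix.\<close>
definition times_X24 :: "nat \<Rightarrow> int list \<Rightarrow> int list" where
  "times_X24 m A = map (\<lambda>s. (\<Sum>r = 1..24. A ! (r - 1) * X24 r (s + 1)) mod int m) [0..<24]"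

definition IAP :: "nat \<Rightarrow> int list \<Rightarrow> int list \<Rightarrow> int \<Rightarrow> int" where
  "IAP m A D j = (A ! nat (j mod 24) + (j div 24) * D ! nat (j mod 24)) mod int m"

fun orbit :: "nat \<Rightarrow> (int \<Rightarrow> int) \<Rightarrow> nat \<Rightarrow> int \<Rightarrow> int" where
  "orbit m u 0 j = u j mod int m"
| "orbit m u (Suc i) j = (- orbit m u i j - orbit m u i (j + 1)) mod int m"

definition periodic_orbit :: "nat \<Rightarrow> (int \<Rightarrow> int) \<Rightarrow> nat \<Rightarrow> nat \<Rightarrow> bool" where
  "periodic_orbit m u p q \<longleftrightarrow>
     (\<forall>i j. orbit m u (i + q) j = orbit m u i j \<and> orbit m u i (j + int p) = orbit m u i j)"

definition prefix_seq :: "(int \<Rightarrow> int) \<Rightarrow> nat \<Rightarrow> int list" where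
  "prefix_seq u n = map (\<lambda>k. u (int k)) [0..<n]"

fun nabla :: "nat \<Rightarrow> int list \<Rightarrow> nat \<Rightarrow> nat \<Rightarrow> int" where
  "nabla m xs 0 j = (xs ! j) mod int m"
| "nabla m xs (Suc i) j = (- nabla m xs i j - nabla m xs i (j + 1)) mod int m"

definition tri_count :: "nat \<Rightarrow> int list \<Rightarrow> int \<Rightarrow> nat" where
  "tri_count m xs x = card {(i, j). i + j < length xs \<and> nabla m xs i j = x}"

definition balanced :: "nat \<Rightarrow> int list \<Rightarrow> bool" where
  "balanced m xs \<longleftrightarrow>
     (\<forall>x \<in> {0..<int m}. \<forall>y \<in> {0..<int m}. tri_count m xs x = tri_count m xs y)"

end

(* Modulo a prime p, p rows of the orbit act like a single row with step p (Frobenius), so the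
   row period 24 p says that ((1 + E\<^sup>p)\<^sup>2\<^sup>4 - 1) S vanishes modulo p, where E is the shift.
   Over the integers 24 S\<^sub>n = G n + n D n with 24-periodic G and D that do not depend on p, and
   therefore G and D are annihilated by the same operator. As 1 + x + x\<^sup>2 is the gcd of (1 + x)\<^sup>2\<^sup>4 - 1
   and x\<^sup>2\<^sup>4 - 1, a Bezout identity turns this into f j + f (j + p) + f (j + 2 p) = 0 mod p for
   f = G, D; hence f is 3-periodic with f 0 + f 1 + f 2 = 0 modulo every large prime, so exactly.
   These linear conditions leave a two-parameter family of tuples A, and for each of its four
   classes modulo 2 the triangle of S[48] with m = 2 is unbalanced. *)

theory Submission
  imports Defs "HOL-Computational_Algebra.Primes" "HOL-Library.Periodic_Fun"
begin

section \<open>Orbits modulo a prime\<close>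

lemma sum_atMost_Suc_choose:
  fixes f :: "nat \<Rightarrow> int"
  shows "(\<Sum>k\<le>Suc i. int (Suc i choose k) * f k) =
         (\<Sum>k\<le>i. int (i choose k) * f k) + (\<Sum>k\<le>i. int (i choose k) * f (Suc k))"
proof -
  have "(\<Sum>k\<le>Suc i. int (Suc i choose k) * f k) =
        f 0 + (\<Sum>k\<le>i. int (i choose k) * f (Suc k)) + (\<Sum>k\<le>i. int (i choose Suc k) * f (Suc k))"
    by (subst sum.atMost_Suc_shift) (simp add: sum.distrib algebra_simps)
  also have "(\<Sum>k\<le>i. int (i choose Suc k) * f (Suc k)) = (\<Sum>k\<le>Suc i. int (i choose k) * f k) - f 0"
    by (subst sum.atMost_Suc_shift) simp
  also have "(\<Sum>k\<le>Suc i. int (i choose k) * f k) = (\<Sum>k\<le>i. int (i choose k) * f k)"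
    by simp
  finally show ?thesis by simp
qed

lemma dvd_recurrence_binomial:
  fixes g :: "nat \<Rightarrow> int \<Rightarrow> int"
  assumes step: "\<And>i j. M dvd g (Suc i) j + g i j + g i (j + h)"
  shows "M dvd g i j - (-1)^i * (\<Sum>k\<le>i. int (i choose k) * g 0 (j + int k * h))"
proof (induction i arbitrary: j)
  case 0
  then show ?case by simp
next
  case (Suc i)
  define S where "S j = (\<Sum>k\<le>i. int (i choose k) * g 0 (j + int k * h))" for j
  have pascal: "(\<Sum>k\<le>Suc i. int (Suc i choose k) * g 0 (j + int k * h)) = S j + S (j + h)"
    unfolding S_def by (subst sum_atMost_Suc_choose) (simp add: algebra_simps)
  have "g (Suc i) j - (-1)^Suc i * (S j + S (j + h)) =
      (g (Suc i) j + g i j + g i (j + h)) - (g i j - (-1)^i * S j) - (g i (j + h) - (-1)^i * S (j + h))"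
    by (simp add: algebra_simps)
  also have "M dvd \<dots>"
    using dvd_diff[OF dvd_diff[OF step Suc.IH[of j]] Suc.IH[of "j + h"]] unfolding S_def .
  finally show ?case unfolding pascal .
qed

lemma sum_choose_prime_dvd:
  fixes f :: "nat \<Rightarrow> int"
  assumes "prime p"
  shows "int p dvd (\<Sum>k\<le>p. int (p choose k) * f k) - (f 0 + f p)"
proof -
  have p0: "p \<noteq> 0" using assms by auto
  have "(\<Sum>k\<le>p. int (p choose k) * f k) - (f 0 + f p) = (\<Sum>k\<in>{..p} - {0, p}. int (p choose k) * f k)"
    using p0 by (simp add: sum_diff)
  also have "int p dvd \<dots>"
    using assms by (intro dvd_sum dvd_mult2) (auto intro: dvd_choose_prime simp flip: of_nat_dvd_iff)
  finally show ?thesis .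
qed

lemma orbit_Suc_dvd: "int m dvd orbit m u (Suc i) j + orbit m u i j + orbit m u i (j + 1)"
proof -
  define x where "x = - orbit m u i j - orbit m u i (j + 1)"
  have "orbit m u (Suc i) j + orbit m u i j + orbit m u i (j + 1) = - (x - x mod int m)"
    by (simp add: x_def)
  then show ?thesis by (simp add: minus_mod_eq_mult_div)
qed

text \<open>Freshman's dream: \<open>p\<close> rows of the orbit act modulo \<open>p\<close> like one row with step \<open>p\<close>.\<close>
lemma orbit_add_prime_dvd:
  assumes p: "prime p"
  shows "int p dvd orbit p u (i + p) j + orbit p u i j + orbit p u i (j + int p)"
proof -
  define B where "B = (\<Sum>k\<le>p. int (p choose k) * orbit p u i (j + int k))"
  define T where "T = orbit p u i j + orbit p u i (j + int p)"
  have step: "int p dvd orbit p u (i + Suc i') j' + orbit p u (i + i') j' + orbit p u (i + i') (j' + 1)"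
    for i' j'
    using orbit_Suc_dvd[of p u "i + i'" j'] by simp
  have binomial: "int p dvd orbit p u (i + p) j - (-1)^p * B"
    using dvd_recurrence_binomial[where g = "\<lambda>i' j. orbit p u (i + i') j", OF step, of p j]
    by (simp add: B_def)
  have frobenius: "int p dvd B - T"
    using sum_choose_prime_dvd[OF p, of "\<lambda>k. orbit p u i (j + int k)"] by (simp add: B_def T_def)
  have sign: "int p dvd (-1)^p + 1"
  proof (cases "p = 2")
    case False
    with prime_ge_2_nat[OF p] have "odd p" by (intro prime_odd_nat[OF p]) simp
    then show ?thesis by simp
  qed simp
  have "int p dvd (orbit p u (i + p) j - (-1)^p * B) + (-1)^p * (B - T) + ((-1)^p + 1) * T"
    using dvd_add[OF dvd_add[OF binomial dvd_mult[OF frobenius]] dvd_mult2[OF sign]] .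
  then show ?thesis by (simp add: T_def algebra_simps)
qed

text \<open>\<open>binomial_shift k h f\<close> is \<open>(1 + E\<^sup>h)\<^sup>k f\<close>, where \<open>E\<close> shifts a sequence by one place.\<close>
definition binomial_shift :: "nat \<Rightarrow> int \<Rightarrow> (int \<Rightarrow> int) \<Rightarrow> int \<Rightarrow> int" where
  "binomial_shift k h f j = (\<Sum>t\<le>k. int (k choose t) * f (j + int t * h))"

lemma binomial_shift_dvd_cong:
  assumes "\<And>n. M dvd f n - g n"
  shows "M dvd binomial_shift k h f j - binomial_shift k h g j"
  unfolding binomial_shift_def sum_subtractf[symmetric] right_diff_distrib[symmetric]
  by (intro dvd_sum dvd_mult assms)

lemma orbit_mult_prime_dvd:
  assumes p: "prime p"
  shows "int p dvd orbit p u (k * p) j - (-1)^k * binomial_shift k (int p) u j"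
proof -
  have step: "int p dvd orbit p u (Suc k' * p) j' + orbit p u (k' * p) j' + orbit p u (k' * p) (j' + int p)"
    for k' j'
    using orbit_add_prime_dvd[OF p, of u "k' * p" j'] by (simp add: add.commute)
  have binomial: "int p dvd orbit p u (k * p) j - (-1)^k * binomial_shift k (int p) (orbit p u 0) j"
    using dvd_recurrence_binomial[where g = "\<lambda>k j. orbit p u (k * p) j", OF step, of k j]
    by (simp add: binomial_shift_def)
  have reduce: "int p dvd binomial_shift k (int p) (orbit p u 0) j - binomial_shift k (int p) u j"
    by (intro binomial_shift_dvd_cong) (simp flip: mod_eq_dvd_iff)
  have "int p dvd (orbit p u (k * p) j - (-1)^k * binomial_shift k (int p) (orbit p u 0) j)
      + (-1)^k * (binomial_shift k (int p) (orbit p u 0) j - binomial_shift k (int p) u j)"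
    using dvd_add[OF binomial dvd_mult[OF reduce]] .
  then show ?thesis by (simp add: algebra_simps)
qed

lemma periodic_orbit_binomial_shift_dvd:
  assumes "prime p" and "periodic_orbit p u c (k * p)"
  shows "int p dvd (-1)^k * binomial_shift k (int p) u j - u j"
proof -
  have "orbit p u (0 + k * p) j = orbit p u 0 j"
    using assms(2) unfolding periodic_orbit_def by blast
  then have orbit_row: "int p dvd u j mod int p - (-1)^k * binomial_shift k (int p) u j"
    using orbit_mult_prime_dvd[OF assms(1), of u k j] by simp
  have reduce: "int p dvd u j - u j mod int p"
    by (simp only: minus_mod_eq_mult_div dvd_triv_left)
  have "int p dvd - ((-1)^k * binomial_shift k (int p) u j - u j)"
    using dvd_add[OF orbit_row reduce] by simp
  then show ?thesis by (simp only: dvd_minus_iff)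
qed

lemma binomial_shift_periodic:
  assumes "\<And>n. f (n + N) = f n"
  shows "binomial_shift k h f (j + N) = binomial_shift k h f j"
proof -
  have "f (j + N + x) = f (j + x)" for x
    using assms[of "j + x"] by (simp add: algebra_simps)
  then show ?thesis
    unfolding binomial_shift_def by simp
qed

lemma binomial_shift_affine:
  "binomial_shift k h (\<lambda>n. F n + n * H n) j =
     binomial_shift k h F j + j * binomial_shift k h H j
     + h * (\<Sum>t\<le>k. int (k choose t) * int t * H (j + int t * h))"
  unfolding binomial_shift_def
  by (simp add: algebra_simps sum.distrib sum_distrib_left)

lemma dvd_periodic_affine:
  fixes P N :: int and F H :: "int \<Rightarrow> int"
  assumes "prime P" and "\<not> P dvd N"
    and F: "\<And>n. F (n + N) = F n" and H: "\<And>n. H (n + N) = H n"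
    and dvd: "\<And>n. P dvd F n + n * H n"
  shows "P dvd H n" and "P dvd F n"
proof -
  have "P dvd (F (n + N) + (n + N) * H (n + N)) - (F n + n * H n)"
    using dvd[of "n + N"] dvd[of n] by (rule dvd_diff)
  then have "P dvd N * H n"
    unfolding F H by (simp add: algebra_simps)
  then show "P dvd H n"
    using assms(1,2) by (simp add: prime_dvd_mult_iff)
  then show "P dvd F n"
    using dvd[of n] by (simp add: dvd_add_left_iff)
qed

section \<open>The sequence \<open>S\<close> modulo a prime\<close>

text \<open>For \<open>n = 24 q + r\<close> one has \<open>S\<^sub>n = A\<^sub>r + q (A X\<^sub>2\<^sub>4)\<^sub>r\<close> and \<open>(A X\<^sub>2\<^sub>4)\<^sub>r = A\<^sub>r + A\<^sub>2\<^sub>3\<^sub>-\<^sub>r\<close>, so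
  \<open>24 S\<^sub>n = intercept A n + n * slope A n\<close>.\<close>
definition slope :: "int list \<Rightarrow> int \<Rightarrow> int" where
  "slope A n = A ! nat (n mod 24) + A ! (23 - nat (n mod 24))"

definition intercept :: "int list \<Rightarrow> int \<Rightarrow> int" where
  "intercept A n = 24 * A ! nat (n mod 24) - n mod 24 * slope A n"

lemma slope_periodic: "slope A (n + 24) = slope A n"
  by (simp add: slope_def)

lemma intercept_periodic: "intercept A (n + 24) = intercept A n"
  by (simp add: intercept_def slope_def)

abbreviation iap_sequence :: "nat \<Rightarrow> int list \<Rightarrow> int \<Rightarrow> int" where
  "iap_sequence m A \<equiv> IAP m (pi_m m A) (times_X24 m (pi_m m A))"

lemma times_X24_nth:
  assumes "r < 24"
  shows "times_X24 m B ! r = (B ! r + B ! (23 - r)) mod int m"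
proof -
  have "r + 1 \<noteq> 24 - r"
    by arith
  then have "(\<Sum>s = 1..24. B ! (s - 1) * X24 s (r + 1))
      = (\<Sum>s = 1..24. (if s = r + 1 then B ! (s - 1) else 0) + (if s = 24 - r then B ! (s - 1) else 0))"
    using assms by (intro sum.cong) (auto simp: X24_def)
  also have "\<dots> = B ! r + B ! (23 - r)"
    using assms by (simp add: sum.distrib Suc_diff_Suc)
  finally show ?thesis
    using assms by (simp add: times_X24_def)
qed

lemma iap_sequence_affine_dvd:
  assumes "length A = 24"
  shows "int m dvd 24 * iap_sequence m A n - (intercept A n + n * slope A n)"
proof -
  define r where "r = nat (n mod 24)"
  have r: "r < 24" "int r = n mod 24"
    by (simp_all add: r_def)
  have pi: "pi_m m A ! k = A ! k mod int m" if "k < 24" for k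
    using that assms by (simp add: pi_m_def)
  have "iap_sequence m A n
      = (A ! r mod int m + n div 24 * ((A ! r mod int m + A ! (23 - r) mod int m) mod int m)) mod int m"
    using r by (simp add: IAP_def times_X24_nth pi flip: r_def)
  also have "\<dots> = (A ! r + n div 24 * slope A n) mod int m"
    unfolding slope_def r_def[symmetric]
    by (intro mod_add_cong mod_mult_cong) (simp_all add: mod_add_eq)
  finally have "(24 * iap_sequence m A n) mod int m = (24 * (A ! r + n div 24 * slope A n)) mod int m"
    by (simp add: mod_mult_right_eq)
  moreover have "intercept A n + n * slope A n = 24 * A ! r + (n - n mod 24) * slope A n"
    by (simp add: intercept_def r_def algebra_simps)
  then have "intercept A n + n * slope A n = 24 * (A ! r + n div 24 * slope A n)"
    by (simp add: minus_mod_eq_mult_div algebra_simps)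
  ultimately show ?thesis
    by (simp add: mod_eq_dvd_iff)
qed

lemma periodic_orbit_slope_intercept_dvd:
  assumes p: "prime p" "p > 24" and A: "length A = 24"
    and periodic: "periodic_orbit p (iap_sequence p A) c (24 * p)"
  shows "int p dvd binomial_shift 24 (int p) (slope A) j - slope A j"
    and "int p dvd binomial_shift 24 (int p) (intercept A) j - intercept A j"
proof -
  let ?u = "iap_sequence p A"
  let ?w = "\<lambda>n. intercept A n + n * slope A n"
  let ?D = "\<lambda>f j. binomial_shift 24 (int p) f j - f j"
  have affine: "int p dvd 24 * ?u n - ?w n" for n
    using iap_sequence_affine_dvd[OF A] .
  have "int p dvd ?D (intercept A) j + j * ?D (slope A) j" for j
  proof -
    have "binomial_shift 24 (int p) (\<lambda>n. 24 * ?u n) j = 24 * binomial_shift 24 (int p) ?u j"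
      by (simp add: binomial_shift_def sum_distrib_left algebra_simps)
    then have "?D (intercept A) j + j * ?D (slope A) j
      = - (binomial_shift 24 (int p) (\<lambda>n. 24 * ?u n) j - binomial_shift 24 (int p) ?w j)
        + 24 * ?D ?u j + (24 * ?u j - ?w j)
        - int p * (\<Sum>t\<le>24. int (24 choose t) * int t * slope A (j + int t * int p))"
      by (simp add: binomial_shift_affine algebra_simps)
    also have "int p dvd \<dots>"
    proof -
      have shift: "int p dvd binomial_shift 24 (int p) (\<lambda>n. 24 * ?u n) j - binomial_shift 24 (int p) ?w j"
        using affine by (rule binomial_shift_dvd_cong)
      have orbit: "int p dvd 24 * ?D ?u j"
        using periodic_orbit_binomial_shift_dvd[OF p(1) periodic, of j] by (intro dvd_mult) simp
      show ?thesis
        using dvd_diff[OF dvd_add[OF dvd_add[OF dvd_minus_iff[THEN iffD2, OF shift] orbit] affine]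
            dvd_triv_left] .
    qed
    finally show ?thesis .
  qed
  moreover have "\<not> int p dvd 24"
    using p(2) by (auto dest: zdvd_imp_le)
  ultimately show "int p dvd ?D (slope A) j" and "int p dvd ?D (intercept A) j"
    using dvd_periodic_affine[of "int p" 24 "?D (intercept A)" "?D (slope A)"] p
    by (simp_all add: binomial_shift_periodic slope_periodic intercept_periodic)
qed

section \<open>A Bezout identity for the shift operator\<close>

lemma periodic_nat_mod:
  fixes y :: "nat \<Rightarrow> 'a" and N :: nat
  assumes "\<And>n. y (n + N) = y n"
  shows "y n = y (n mod N)"
proof -
  have "y (m + k * N) = y m" for m k
  proof (induction k)
    case (Suc k)
    then show ?case
      using assms[of "m + k * N"] by (simp add: algebra_simps)
  qed simp
  then show ?thesis
    by (metis mod_div_mult_eq)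
qed

lemma sum_periodic_convolution:
  fixes y :: "nat \<Rightarrow> 'a :: comm_semiring_1"
  assumes "N > 0" and "\<And>n. y (n + N) = y n"
  shows "(\<Sum>i<I. \<Sum>t<T. a i * b t * y (i + t))
       = (\<Sum>n<N. (\<Sum>i<I. \<Sum>t<T. of_bool ((i + t) mod N = n) * a i * b t) * y n)"
proof -
  have delta: "y (i + t) = (\<Sum>n<N. of_bool ((i + t) mod N = n) * y n)" for i t
  proof -
    have "{..<N} \<inter> {n. (i + t) mod N = n} = {(i + t) mod N}"
      using assms(1) by auto
    then show ?thesis
      using periodic_nat_mod[where y = y, OF assms(2)] by simp
  qed
  have "(\<Sum>i<I. \<Sum>t<T. a i * b t * y (i + t))
      = (\<Sum>i<I. \<Sum>t<T. \<Sum>n<N. of_bool ((i + t) mod N = n) * a i * b t * y n)"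
    by (simp only: delta sum_distrib_left mult.assoc mult.left_commute)
  also have "\<dots> = (\<Sum>i<I. \<Sum>n<N. \<Sum>t<T. of_bool ((i + t) mod N = n) * a i * b t * y n)"
    by (intro sum.cong refl sum.swap)
  also have "\<dots> = (\<Sum>n<N. \<Sum>i<I. \<Sum>t<T. of_bool ((i + t) mod N = n) * a i * b t * y n)"
    by (rule sum.swap)
  also have "\<dots> = (\<Sum>n<N. (\<Sum>i<I. \<Sum>t<T. of_bool ((i + t) mod N = n) * a i * b t) * y n)"
    by (simp only: sum_distrib_right)
  finally show ?thesis .
qed

text \<open>The \<open>let\<close> makes evaluation by \<open>code_simp\<close> compute each row only once.\<close>
fun pascal_row :: "nat \<Rightarrow> int list" where
  "pascal_row 0 = [1]"
| "pascal_row (Suc n) = (let r = pascal_row n in map2 (+) (0 # r) (r @ [0]))"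

lemma length_pascal_row: "length (pascal_row n) = Suc n"
  by (induction n) (simp_all add: Let_def)

lemma pascal_row_nth: "k \<le> n \<Longrightarrow> pascal_row n ! k = int (n choose k)"
proof (induction n arbitrary: k)
  case 0
  then show ?case by simp
next
  case (Suc n)
  have "pascal_row (Suc n) ! k = (0 # pascal_row n) ! k + (pascal_row n @ [0]) ! k"
    using Suc.prems length_pascal_row[of n] by (simp add: Let_def)
  also have "\<dots> = int (Suc n choose k)"
    using Suc length_pascal_row[of n]
    by (cases k) (auto simp: nth_append not_le le_Suc_eq)
  finally show ?case .
qed

text \<open>The coefficients of a polynomial \<open>a(x)\<close> of degree \<open>21\<close> with
  \<open>a(x) ((1 + x)\<^sup>2\<^sup>4 - 1) \<equiv> 117574722720 (1 + x + x\<^sup>2) (mod x\<^sup>2\<^sup>4 - 1)\<close>.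
  It exists because \<open>1 + x + x\<^sup>2\<close> is the gcd of \<open>(1 + x)\<^sup>2\<^sup>4 - 1\<close> and \<open>x\<^sup>2\<^sup>4 - 1\<close> over \<open>\<rat>\<close>.\<close>
definition bezout_coeffs :: "int list" where
  "bezout_coeffs = [-14877151663, 33733268828, -39209998903, 24332847240, 0, -14618605282,
    9761484303, 6243225984, -15655307305, 8729493830, 7240423736, -15886408200, 8469722745,
    7452995900, -15863124495, 8446439040, 7240423736, -15603353410, 8677539935, 6243225984,
    -14571362937, 9714241958]"

lemma bezout_coeffs_convolution:
  assumes "n < 24"
  shows "(\<Sum>i<22. \<Sum>t<25. of_bool ((i + t) mod 24 = n)
            * bezout_coeffs ! i * (int (24 choose t) - of_bool (t = 0)))
         = (if n < 3 then 117574722720 else 0)"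
proof -
  have table: "map (\<lambda>n. let b = pascal_row 24 in
      sum_list (map (\<lambda>i. sum_list (map (\<lambda>t. of_bool ((i + t) mod 24 = n)
        * bezout_coeffs ! i * (b ! t - of_bool (t = 0))) [0..<25])) [0..<22])) [0..<24]
    = map (\<lambda>n. if n < 3 then 117574722720 else 0) [0..<24]"
    by code_simp
  have "(\<Sum>t<25. of_bool ((i + t) mod 24 = n) * bezout_coeffs ! i * (int (24 choose t) - of_bool (t = 0)))
      = sum_list (map (\<lambda>t. of_bool ((i + t) mod 24 = n)
          * bezout_coeffs ! i * (pascal_row 24 ! t - of_bool (t = 0))) [0..<25])" for i
    by (simp add: sum_set_upt_conv_sum_list_nat [symmetric] atLeast0LessThan)
      (intro sum.cong refl, simp add: pascal_row_nth)
  then show ?thesis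
    using arg_cong[OF table, of "\<lambda>xs. xs ! n"] assms
    by (simp add: sum_set_upt_conv_sum_list_nat [symmetric] atLeast0LessThan)
qed

lemma bezout_three_term:
  fixes f :: "int \<Rightarrow> int"
  assumes periodic: "\<And>n. f (n + 24) = f n"
  shows "(\<Sum>i<22. bezout_coeffs ! i * (binomial_shift 24 h f (j + int i * h) - f (j + int i * h)))
       = 117574722720 * (f j + f (j + h) + f (j + 2 * h))"
proof -
  interpret periodic_fun_simple f 24
    by standard (rule periodic)
  define y where "y n = f (j + int n * h)" for n
  have y_periodic: "y (n + 24) = y n" for n
    using plus_of_int[of "j + int n * h" h] by (simp add: y_def algebra_simps)
  have shift: "binomial_shift 24 h f (j + int i * h) - f (j + int i * h)
      = (\<Sum>t<25. (int (24 choose t) - of_bool (t = 0)) * y (i + t))" for i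
  proof -
    have "binomial_shift 24 h f (j + int i * h) = (\<Sum>t<25. int (24 choose t) * y (i + t))"
      unfolding binomial_shift_def y_def by (intro sum.cong) (auto simp: algebra_simps)
    moreover have "{..<25} \<inter> {t. t = 0} = {0 :: nat}"
      by auto
    then have "(\<Sum>t<25. of_bool (t = 0) * y (i + t)) = f (j + int i * h)"
      by (simp add: y_def)
    ultimately show ?thesis
      by (simp add: sum_subtractf left_diff_distrib)
  qed
  have "(\<Sum>i<22. bezout_coeffs ! i * (binomial_shift 24 h f (j + int i * h) - f (j + int i * h)))
      = (\<Sum>i<22. \<Sum>t<25. bezout_coeffs ! i * (int (24 choose t) - of_bool (t = 0)) * y (i + t))"
    by (simp add: shift sum_distrib_left mult.assoc)
  also have "\<dots> = (\<Sum>n<24. (\<Sum>i<22. \<Sum>t<25. of_bool ((i + t) mod 24 = n)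
      * bezout_coeffs ! i * (int (24 choose t) - of_bool (t = 0))) * y n)"
    by (rule sum_periodic_convolution [where y = y, OF _ y_periodic]) simp
  also have "\<dots> = (\<Sum>n<24. (if n < 3 then 117574722720 else 0) * y n)"
    by (intro sum.cong refl) (simp add: bezout_coeffs_convolution)
  also have "\<dots> = 117574722720 * (y 0 + y 1 + y 2)"
    by (simp add: lessThan_nat_numeral lessThan_Suc)
  finally show ?thesis
    by (simp add: y_def)
qed

section \<open>Period three\<close>

lemma three_term_dvd_if_binomial_shift_dvd:
  assumes p: "prime p" "p > 117574722720"
    and periodic: "\<And>n. f (n + 24) = f n"
    and shift: "\<And>j. int p dvd binomial_shift 24 (int p) f j - f j"
  shows "int p dvd f j + f (j + int p) + f (j + 2 * int p)"
proof -
  have "int p dvd (\<Sum>i<22. bezout_coeffs ! i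
      * (binomial_shift 24 (int p) f (j + int i * int p) - f (j + int i * int p)))"
    by (intro dvd_sum dvd_mult shift)
  then have "int p dvd 117574722720 * (f j + f (j + int p) + f (j + 2 * int p))"
    by (simp only: bezout_three_term [where f = f, OF periodic])
  moreover have "\<not> int p dvd 117574722720"
    using p(2) by (auto dest: zdvd_imp_le)
  moreover have "prime (int p)"
    using p(1) by simp
  ultimately show ?thesis
    using prime_dvd_mult_iff by blast
qed

lemma periodic_int_mod:
  fixes g :: "int \<Rightarrow> 'a"
  assumes "\<And>n. g (n + c) = g n"
  shows "g n = g (n mod c)"
proof -
  interpret periodic_fun_simple g c
    by standard (rule assms)
  show ?thesis
    using plus_of_int[of "n mod c" "n div c"] by (simp add: mod_div_mult_eq)
qed

lemma periodic_gcd: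
  fixes g :: "int \<Rightarrow> 'a"
  assumes "\<And>n. g (n + a) = g n" and "\<And>n. g (n + b) = g n"
  shows "g (n + gcd a b) = g n"
proof -
  interpret a: periodic_fun_simple g a
    by standard (rule assms(1))
  interpret b: periodic_fun_simple g b
    by standard (rule assms(2))
  obtain u v where "u * a + v * b = gcd a b"
    using bezout_int by blast
  then have "g (n + gcd a b) = g ((n + of_int u * a) + of_int v * b)"
    by (simp add: algebra_simps)
  also have "\<dots> = g n"
    by (simp only: a.plus_of_int b.plus_of_int)
  finally show ?thesis .
qed

text \<open>Modulo \<open>p\<close>, the three-term relation makes \<open>f\<close> periodic with period \<open>3 p\<close>; together with the
  period \<open>24\<close> this gives the period \<open>gcd (3 p) 24 = 3\<close>.\<close>
lemma period3_dvd_if_three_term_dvd: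
  assumes p: "prime p" "p > 3"
    and periodic: "\<And>n. f (n + 24) = f n"
    and three_term: "\<And>j. int p dvd f j + f (j + int p) + f (j + 2 * int p)"
  shows "int p dvd f (j + 3) - f j" and "int p dvd f 0 + f 1 + f 2"
proof -
  define g where "g n = f n mod int p" for n
  have "int p dvd (f (j + int p) + f (j + 2 * int p) + f (j + 3 * int p))
      - (f j + f (j + int p) + f (j + 2 * int p))" for j
    using dvd_diff[OF three_term[of "j + int p"] three_term[of j]] by (simp add: algebra_simps)
  then have "g (j + 3 * int p) = g j" for j
    by (simp add: g_def mod_eq_dvd_iff)
  moreover have "g (j + 24) = g j" for j
    by (simp add: g_def periodic)
  moreover have "gcd (3 * int p) 24 = 3"
  proof -
    have "int p \<noteq> 2"
      using p(2) by simp
    then have "coprime (int p) 2"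
      using p(1) by (intro primes_coprime) simp_all
    then have "gcd (int p) 8 = 1"
      using coprime_power_right_iff[of "int p" 2 3] by simp
    then show ?thesis
      using gcd_mult_distrib_int[of 3 "int p" 8] by simp
  qed
  ultimately have g3: "g (j + 3) = g j" for j
    using periodic_gcd[of g "3 * int p" 24 j] by simp
  then show "int p dvd f (j + 3) - f j"
    by (simp add: g_def mod_eq_dvd_iff)
  have g_mod3: "g n = g (n mod 3)" for n
    using periodic_int_mod[of g 3, OF g3] .
  have "\<not> 3 dvd p"
    using p prime_nat_not_dvd[of p 3] by simp
  then have "int p mod 3 = 1 \<and> 2 * int p mod 3 = 2 \<or> int p mod 3 = 2 \<and> 2 * int p mod 3 = 1"
    by presburger
  then have "g 1 = g (int p) \<and> g 2 = g (2 * int p) \<or> g 1 = g (2 * int p) \<and> g 2 = g (int p)"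
    using g_mod3[of "int p"] g_mod3[of "2 * int p"] by auto
  then have "(f 0 + f 1 + f 2) mod int p = (f 0 + f (int p) + f (2 * int p)) mod int p"
  proof (elim disjE conjE)
    assume "g 1 = g (int p)" and "g 2 = g (2 * int p)"
    then show ?thesis
      unfolding g_def by (intro mod_add_cong) simp_all
  next
    assume "g 1 = g (2 * int p)" and "g 2 = g (int p)"
    then have "(f 0 + f 2 + f 1) mod int p = (f 0 + f (int p) + f (2 * int p)) mod int p"
      unfolding g_def by (intro mod_add_cong) simp_all
    then show ?thesis
      by (simp add: ac_simps)
  qed
  then show "int p dvd f 0 + f 1 + f 2"
    using three_term[of 0] by (simp add: mod_eq_0_iff_dvd [symmetric])
qed

lemma eq_0_if_dvd_large_primes:
  fixes x :: int
  assumes "\<And>p. prime p \<Longrightarrow> p > N \<Longrightarrow> int p dvd x"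
  shows "x = 0"
proof (rule ccontr)
  assume "x \<noteq> 0"
  obtain p where p: "prime p" "p > max N (nat \<bar>x\<bar>)"
    using bigger_prime by blast
  then have "int p dvd x"
    by (intro assms) simp_all
  then have "int p \<le> \<bar>x\<bar>"
    using dvd_imp_le_int[OF \<open>x \<noteq> 0\<close>, of "int p"] by simp
  with p(2) show False
    by (simp add: nat_less_iff)
qed

lemma period3_if_binomial_shift_dvd_large_primes:
  assumes periodic: "\<And>n. f (n + 24) = f n"
    and shift: "\<And>p j. prime p \<Longrightarrow> p > 117574722720 \<Longrightarrow>
                  int p dvd binomial_shift 24 (int p) f j - f j"
  shows "f (j + 3) = f j" and "f 0 + f 1 + f 2 = 0"
proof -
  have "int p dvd f (j + 3) - f j \<and> int p dvd f 0 + f 1 + f 2"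
    if "prime p" "p > 117574722720" for p
  proof -
    have "p > 3"
      using that(2) by simp
    moreover have "int p dvd f j + f (j + int p) + f (j + 2 * int p)" for j
      using three_term_dvd_if_binomial_shift_dvd[OF that periodic shift[OF that]] .
    ultimately show ?thesis
      using period3_dvd_if_three_term_dvd[where f = f, OF that(1) _ periodic] by blast
  qed
  then have "f (j + 3) - f j = 0" and "f 0 + f 1 + f 2 = 0"
    by (blast intro: eq_0_if_dvd_large_primes)+
  then show "f (j + 3) = f j" and "f 0 + f 1 + f 2 = 0"
    by simp_all
qed

lemma periodic_orbits_imp_slope_intercept_period3:
  assumes A: "length A = 24"
    and periodic: "\<And>p. prime p \<Longrightarrow> p > 117574722720 \<Longrightarrow>
                     periodic_orbit p (iap_sequence p A) (24 * p) (24 * p)"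
  shows "slope A (n + 3) = slope A n" and "intercept A (n + 3) = intercept A n"
    and "slope A 0 + slope A 1 + slope A 2 = 0"
proof -
  have "p > 24" if "p > 117574722720" for p :: nat
    using that by simp
  note shift = periodic_orbit_slope_intercept_dvd[OF _ this A periodic]
  show "slope A (n + 3) = slope A n" and "slope A 0 + slope A 1 + slope A 2 = 0"
    using period3_if_binomial_shift_dvd_large_primes[OF slope_periodic shift(1)] by blast+
  show "intercept A (n + 3) = intercept A n"
    using period3_if_binomial_shift_dvd_large_primes[OF intercept_periodic shift(2)] by blast
qed

section \<open>The two-parameter family and its triangles modulo 2\<close>

definition period3_solution :: "int \<Rightarrow> int \<Rightarrow> int list" where
  "period3_solution a b = map (\<lambda>k.
       a * [-8, 1, 7, -9, 3, 6, -10, 5, 5, -11, 7, 4, -12, 9, 3, -13, 11, 2, -14, 13, 1, -15, 15, 0] ! k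
     + b * [-1, 0, 1, -1, 0, 1, -1, 0, 1, -1, 0, 1, -1, 0, 1, -1, 0, 1, -1, 0, 1, -1, 0, 1] ! k)
     [0..<24]"

lemma eq_period3_solution:
  assumes A: "length A = 24"
    and slope3: "\<And>n. slope A (n + 3) = slope A n"
    and intercept3: "\<And>n. intercept A (n + 3) = intercept A n"
    and slope_sum: "slope A 0 + slope A 1 + slope A 2 = 0"
  shows "A = period3_solution (A ! 1) (A ! 23)"
proof -
  have S: "slope A n = slope A (n mod 3)" and I: "intercept A n = intercept A (n mod 3)" for n
    using periodic_int_mod[of "slope A", OF slope3] periodic_int_mod[of "intercept A", OF intercept3]
    by blast+
  \<comment> \<open>\<open>slope A n = slope A (23 - n)\<close>, so the instances of \<open>S\<close> up to \<open>12\<close> cover all of them.\<close>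
  note linear_equations = slope_sum
    S[of 3] S[of 4] S[of 5] S[of 6] S[of 7] S[of 8] S[of 9] S[of 10] S[of 11] S[of 12]
    I[of 3] I[of 4] I[of 5] I[of 6] I[of 7] I[of 8] I[of 9] I[of 10] I[of 11] I[of 12] I[of 13]
    I[of 14] I[of 15] I[of 16] I[of 17] I[of 18] I[of 19] I[of 20] I[of 21] I[of 22] I[of 23]
  have entries: "\<forall>k\<in>{..<24}. A ! k = period3_solution (A ! 1) (A ! 23) ! k"
    using linear_equations[simplified slope_def intercept_def, simplified]
    unfolding period3_solution_def One_nat_def
    by (simp add: lessThan_nat_numeral lessThan_Suc)
  show ?thesis
  proof (rule nth_equalityI)
    show "length A = length (period3_solution (A ! 1) (A ! 23))"
      using A by (simp add: period3_solution_def)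
    show "A ! k = period3_solution (A ! 1) (A ! 23) ! k" if "k < length A" for k
    proof -
      have "k \<in> {..<24}"
        using that A by simp
      with entries show ?thesis
        by (rule bspec)
    qed
  qed
qed

definition derived_row :: "nat \<Rightarrow> int list \<Rightarrow> int list" where
  "derived_row m r = map2 (\<lambda>x y. (- x - y) mod int m) r (tl r)"

fun triangle_rows :: "nat \<Rightarrow> nat \<Rightarrow> int list \<Rightarrow> int list list" where
  "triangle_rows m 0 r = []"
| "triangle_rows m (Suc n) r = r # triangle_rows m n (derived_row m r)"

lemma length_derived_row_power [simp]: "length ((derived_row m ^^ i) r) = length r - i"
  by (induction i) (simp_all add: derived_row_def)

lemma derived_row_power_nth:
  "i + j < length xs \<Longrightarrow> (derived_row m ^^ i) (map (\<lambda>x. x mod int m) xs) ! j = nabla m xs i j"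
  by (induction i arbitrary: j) (simp_all add: derived_row_def nth_tl)

lemma triangle_rows_nth: "i < n \<Longrightarrow> triangle_rows m n r ! i = (derived_row m ^^ i) r"
proof (induction n arbitrary: r i)
  case (Suc n)
  then show ?case
    by (cases i) (simp_all add: funpow_swap1)
qed simp

lemma length_triangle_rows [simp]: "length (triangle_rows m n r) = n"
  by (induction n arbitrary: r) simp_all

definition triangle_entries :: "nat \<Rightarrow> int list \<Rightarrow> int list" where
  "triangle_entries m xs = concat (triangle_rows m (length xs) (map (\<lambda>y. y mod int m) xs))"

lemma tri_count_eq_count_list: "tri_count m xs x = count_list (triangle_entries m xs) x"
proof -
  define R where "R = triangle_rows m (length xs) (map (\<lambda>y. y mod int m) xs)"
  have "{(i, j). i + j < length xs \<and> nabla m xs i j = x}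
      = (SIGMA i:{..<length R}. {j. j < length (R ! i) \<and> R ! i ! j = x})"
    by (auto simp: R_def triangle_rows_nth derived_row_power_nth)
  then have "tri_count m xs x = (\<Sum>i<length R. count_list (R ! i) x)"
    by (simp add: tri_count_def card_SigmaI count_list_eq_length_filter length_filter_conv_card eq_commute)
  also have "\<dots> = count_list (concat R) x"
    by (induction R rule: rev_induct) (simp_all add: nth_append)
  finally show ?thesis
    by (simp add: R_def triangle_entries_def)
qed

lemma pi_m_period3_solution_mod_2:
  "pi_m 2 (period3_solution a b) = pi_m 2 (period3_solution (a mod 2) (b mod 2))"
proof -
  have "(a * v + b * w) mod 2 = (a mod 2 * v + b mod 2 * w) mod 2" for v w :: int
    by (intro mod_add_cong mod_mult_cong) simp_all
  then show ?thesis
    by (simp add: pi_m_def period3_solution_def)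
qed

lemma period3_solution_unbalanced:
  "\<not> balanced 2 (prefix_seq (iap_sequence 2 (period3_solution a b)) 48)"
proof -
  let ?count = "\<lambda>a b x. count_list (triangle_entries 2
      (prefix_seq (iap_sequence 2 (period3_solution a b)) 48)) x"
  have "?count 0 0 0 \<noteq> ?count 0 0 1" and "?count 0 1 0 \<noteq> ?count 0 1 1"
    and "?count 1 0 0 \<noteq> ?count 1 0 1" and "?count 1 1 0 \<noteq> ?count 1 1 1"
    by code_simp+
  moreover have "a mod 2 \<in> {0, 1}" and "b mod 2 \<in> {0, 1}"
    by auto
  ultimately have "?count (a mod 2) (b mod 2) 0 \<noteq> ?count (a mod 2) (b mod 2) 1"
    by auto
  then have "tri_count 2 (prefix_seq (iap_sequence 2 (period3_solution a b)) 48) 0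
      \<noteq> tri_count 2 (prefix_seq (iap_sequence 2 (period3_solution a b)) 48) 1"
    unfolding tri_count_eq_count_list pi_m_period3_solution_mod_2[of a b] .
  moreover have "(0 :: int) \<in> {0..<int 2}" and "(1 :: int) \<in> {0..<int 2}"
    by simp_all
  ultimately show ?thesis
    unfolding balanced_def by blast
qed

theorem corollary6:
  shows "\<not> (\<exists>A :: int list. length A = 24 \<and>
           (\<forall>m :: nat. m > 0 \<longrightarrow>
              (let S = IAP m (pi_m m A) (times_X24 m (pi_m m A)) in
                 periodic_orbit m S (24 * m) (24 * m) \<and>
                 (\<forall>l :: nat. balanced m (prefix_seq S (24 * l * m))))))"
proof
  assume "\<exists>A :: int list. length A = 24 \<and>
           (\<forall>m :: nat. m > 0 \<longrightarrow>
              (let S = IAP m (pi_m m A) (times_X24 m (pi_m m A)) in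
                 periodic_orbit m S (24 * m) (24 * m) \<and>
                 (\<forall>l :: nat. balanced m (prefix_seq S (24 * l * m)))))"
  then obtain A where A: "length A = 24"
    and periodic: "\<And>m. m > 0 \<Longrightarrow> periodic_orbit m (iap_sequence m A) (24 * m) (24 * m)"
    and balanced: "\<And>m l. m > 0 \<Longrightarrow> balanced m (prefix_seq (iap_sequence m A) (24 * l * m))"
    by (auto simp: Let_def)
  have "A = period3_solution (A ! 1) (A ! 23)"
    using periodic_orbits_imp_slope_intercept_period3[OF A periodic] A
    by (intro eq_period3_solution) auto
  moreover have "balanced 2 (prefix_seq (iap_sequence 2 A) 48)"
    using balanced[of 2 1] by simp
  ultimately show False
    using period3_solution_unbalanced by metis
qed

end
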